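(* Let $0<q<1$, let $a,b,c,d\in\mathbb{C}$ with $aq\notin\{q^{-m}:m\in\mathbb{N}\}$, let $|t|<1$ with $tc,td\notin\{q^{-m}:m\in\mathbb{N}\}$, let $n\in\mathbb{N}$ and $x=\cos\theta$, $\theta\in[0,\pi]$. Then \[ \sum_{k=0}^\infty\frac{t^k}{(q;q)_k}\,p_n(q^k;a,b;q)\,Q_k(x;c,d|q)=\frac{(tc,td;q)_\infty}{(te^{i\theta},te^{-i\theta};q)_\infty}\,{}_4\phi_3\!\left(\begin{matrix}q^{-n},\,abq^{n+1},\,te^{i\theta},\,te^{-i\theta}\\ aq,\,tc,\,td\end{matrix};q,q\right). \]
   Context: $(x;q)_k=\prod_{j=0}^{k-1}(1-xq^j)$, $(x;q)_\infty=\prod_{j\ge0}(1-xq^j)$, $(x_1,\dots,x_r;q)_k=\prod_i(x_i;q)_k$. ${}_{r}\phi_{s}\!\left(\begin{smallmatrix}a_1,\dots,a_r\\ b_1,\dots,b_s\end{smallmatrix};q,z\right)=\sum_{j\ge0}\frac{(a_1,\dots,a_r;q)_j}{(q,b_1,\dots,b_s;q)_j}\bigl((-1)^jq^{j(j-1)/2}\bigr)^{1+s-r}z^j$. Little $q$-Jacobi polynomials: $p_n(x;a,b;q)={}_2\phi_1\!\left(\begin{smallmatrix}q^{-n},abq^{n+1}\\ aq\end{smallmatrix};q,qx\right)$. Al-Salam–Chihara polynomials: $Q_n(x;c,d|q)=\frac{(cd;q)_n}{c^n}\,{}_3\phi_2\!\left(\begin{smallmatrix}q^{-n},ce^{i\theta},ce^{-i\theta}\\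 cd,\,0\end{smallmatrix};q,q\right)$, $x=\cos\theta$. *)

theory Defs
  imports "HOL-Analysis.Analysis"
begin

definition qpoch :: "complex \<Rightarrow> complex \<Rightarrow> nat \<Rightarrow> complex" where
  "qpoch x q k = (\<Prod>j<k. 1 - x * q ^ j)"

definition qpoch_inf :: "complex \<Rightarrow> complex \<Rightarrow> complex" where
  "qpoch_inf x q = lim (\<lambda>k. qpoch x q k)"

definition qphi :: "complex list \<Rightarrow> complex list \<Rightarrow> complex \<Rightarrow> complex \<Rightarrow> complex" where
  "qphi as bs q z =
     (\<Sum>j. prod_list (map (\<lambda>a. qpoch a q j) as)
            / (qpoch q q j * prod_list (map (\<lambda>b. qpoch b q j) bs))
            * ((-1) ^ j * q ^ (j * (j - 1) div 2)) powi (1 + int (length bs) - int (length as))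
            * z ^ j)"

definition little_qJacobi :: "nat \<Rightarrow> complex \<Rightarrow> complex \<Rightarrow> complex \<Rightarrow> complex \<Rightarrow> complex" where
  "little_qJacobi n x a b q = qphi [inverse (q ^ n), a * b * q ^ (n + 1)] [a * q] q (q * x)"

definition al_salam_chihara :: "nat \<Rightarrow> real \<Rightarrow> complex \<Rightarrow> complex \<Rightarrow> complex \<Rightarrow> complex" where
  "al_salam_chihara n \<theta> c d q =
     qpoch (c * d) q n / c ^ n * qphi [inverse (q ^ n), c * cis \<theta>, c * cis (- \<theta>)] [c * d, 0] q q"

end

theory Submission
  imports Defs
begin

(*
  Since p_n(q^k) is a terminating 2phi1, it is a finite sum sum_{j<=n} alpha_j (q^j)^k;
  the left-hand side therefore splits into n+1 copies of the Al-Salam--Chihara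
  generating function  sum_k s^k Q_k/(q;q)_k = (sc,sd;q)_inf/(se,s/e;q)_inf  (e = e^{i theta})
  evaluated at s = t q^j, and splitting off the first j factors of each infinite
  product turns the resulting finite sum into the terminating 4phi3.
*)

section \<open>Algebra of q-Pochhammer symbols\<close>

lemma qpoch_0 [simp]: "qpoch x q 0 = 1"
  by (simp add: qpoch_def)

lemma qpoch_Suc: "qpoch x q (Suc n) = qpoch x q n * (1 - x * q ^ n)"
  by (simp add: qpoch_def)

lemma qpoch_Suc_left: "qpoch x q (Suc n) = (1 - x) * qpoch (x * q) q n"
  unfolding qpoch_def by (subst prod.lessThan_Suc_shift) (simp add: mult.assoc)

lemma qpoch_add: "qpoch x q (m + n) = qpoch x q m * qpoch (x * q ^ m) q n"
  by (induct n) (simp_all add: qpoch_Suc power_add mult.assoc mult.commute mult.left_commute)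

lemma qpoch_of_zero [simp]: "qpoch 0 q n = 1"
  by (simp add: qpoch_def)

lemma qpoch_one_Suc [simp]: "qpoch 1 q (Suc j) = 0"
  by (simp add: qpoch_Suc_left)

lemma qpoch_contiguous:
  "qpoch A q (Suc j) = qpoch (A * q) q (Suc j) - A * (1 - q ^ Suc j) * qpoch (A * q) q j"
  by (simp only: qpoch_Suc_left[of A] qpoch_Suc[of "A * q"]) (simp add: algebra_simps)

lemma qpoch_inverse_power_vanish:
  assumes "q \<noteq> 0" and "n < j"
  shows "qpoch (inverse (q ^ n)) q j = 0"
  unfolding qpoch_def using assms by (intro prod_zero) (auto intro!: bexI[of _ n])

lemma qpoch_inverse_power_shift:
  assumes "x * q ^ K = 1"
  shows "qpoch (x * q) q j * (1 - q ^ K) = qpoch x q j * (q ^ j - q ^ K)"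
proof (induct j)
  case (Suc j)
  have "(q ^ j - q ^ K) * (1 - x * q * q ^ j) - (1 - x * q ^ j) * (q ^ Suc j - q ^ K)
      = q ^ j * (1 - q) * (1 - x * q ^ K)"
    by (simp add: algebra_simps)
  hence key: "(q ^ j - q ^ K) * (1 - x * q * q ^ j) = (1 - x * q ^ j) * (q ^ Suc j - q ^ K)"
    using assms by simp
  have "qpoch (x * q) q (Suc j) * (1 - q ^ K) = (qpoch (x * q) q j * (1 - q ^ K)) * (1 - x * q * q ^ j)"
    by (simp add: qpoch_Suc algebra_simps)
  also have "\<dots> = qpoch x q j * ((q ^ j - q ^ K) * (1 - x * q * q ^ j))"
    by (simp add: Suc)
  also have "\<dots> = qpoch x q (Suc j) * (q ^ Suc j - q ^ K)"
    unfolding key by (simp add: qpoch_Suc)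
  finally show ?case .
qed simp

lemma isCont_qpoch: "isCont f x \<Longrightarrow> isCont (\<lambda>d. qpoch (f d) q n) x"
  unfolding qpoch_def by (intro continuous_intros)

lemma norm_mult_power_less_one:
  fixes q z :: complex
  assumes "norm q < 1" and "norm z < 1"
  shows "norm (z * q ^ N) < 1"
proof -
  have "norm (z * q ^ N) = norm z * norm q ^ N" by (simp add: norm_mult norm_power)
  also have "\<dots> \<le> norm z" using assms by (simp add: mult_left_le power_le_one)
  finally show ?thesis using assms by simp
qed

lemma qpoch_nonzero_small:
  assumes "norm x < 1" and "norm q < 1"
  shows "qpoch x q m \<noteq> 0"
proof -
  have "1 - x * q ^ j \<noteq> 0" for j
    using norm_mult_power_less_one[OF assms(2,1), of j] by auto
  thus ?thesis by (simp add: qpoch_def)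
qed

lemma qpoch_q_nonzero: "norm q < 1 \<Longrightarrow> qpoch q q m \<noteq> 0"
  by (rule qpoch_nonzero_small)

lemma qpoch_nonzero:
  assumes "\<forall>m::nat. x \<noteq> inverse (q ^ m)" and "q \<noteq> 0"
  shows "qpoch x q j \<noteq> 0"
proof
  assume "qpoch x q j = 0"
  then obtain i where "1 - x * q ^ i = 0" by (auto simp: qpoch_def prod_zero_iff)
  hence "x = inverse (q ^ i)" using assms(2) by (simp add: field_simps)
  with assms(1) show False by blast
qed

section \<open>The q-binomial theorem\<close>

definition qbinom_coeff :: "complex \<Rightarrow> complex \<Rightarrow> nat \<Rightarrow> complex" where
  "qbinom_coeff a q m = qpoch a q m / qpoch q q m"

lemma qbinom_coeff_Suc:
  "norm q < 1 \<Longrightarrow> qbinom_coeff a q (Suc m) * (1 - q ^ Suc m) = qbinom_coeff a q m * (1 - a * q ^ m)"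
  using qpoch_q_nonzero[of q m] qpoch_q_nonzero[of q "Suc m"]
  by (simp add: qbinom_coeff_def qpoch_Suc field_simps)

text \<open>The ratio of consecutive terms tends to |z| < 1, so the series converges absolutely.\<close>
lemma qbinom_coeff_summable:
  assumes q: "norm q < 1" and z: "norm z < 1"
  shows "summable (\<lambda>m. norm (qbinom_coeff a q m * z ^ m))"
proof -
  define r where "r m = (1 + norm a * norm q ^ m) * norm z / (1 - norm q ^ Suc m)" for m
  define c where "c = (1 + norm z) / 2"
  have "r \<longlonglongrightarrow> (1 + norm a * 0) * norm z / (1 - 0)"
    unfolding r_def using q by (intro tendsto_intros LIMSEQ_power_zero LIMSEQ_Suc) auto
  moreover have "norm z < c" using z by (simp add: c_def)
  ultimately obtain N where N: "\<And>m. m \<ge> N \<Longrightarrow> r m < c"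
    using order_tendstoD(2) by (fastforce simp: eventually_sequentially)
  show ?thesis
  proof (rule summable_ratio_test[of c N])
    show "c < 1" using z by (simp add: c_def)
    fix m assume m: "m \<ge> N"
    have qs: "norm q ^ Suc m < 1" using q by (metis norm_ge_zero power_less_one_iff zero_less_Suc)
    hence "1 - q ^ Suc m \<noteq> 0" by (metis norm_one norm_power order.irrefl right_minus_eq)
    hence step: "qbinom_coeff a q (Suc m) = qbinom_coeff a q m * (1 - a * q ^ m) / (1 - q ^ Suc m)"
      using qbinom_coeff_Suc[OF q, of a m] by (simp add: field_simps)
    have n1: "norm (1 - a * q ^ m) \<le> 1 + norm a * norm q ^ m"
      using norm_triangle_ineq4[of 1 "a * q ^ m"] by (simp add: norm_mult norm_power)
    have n2: "1 - norm q ^ Suc m \<le> norm (1 - q ^ Suc m)"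
      using norm_triangle_ineq2[of 1 "q ^ Suc m"] by (simp only: norm_power norm_one)
    have "norm (1 - a * q ^ m) * norm z / norm (1 - q ^ Suc m) \<le> r m"
      unfolding r_def using qs by (intro frac_le mult_right_mono n1 n2) auto
    hence ratio: "norm (1 - a * q ^ m) * norm z / norm (1 - q ^ Suc m) \<le> c"
      using N[OF m] by simp
    have "norm (qbinom_coeff a q (Suc m) * z ^ Suc m) =
        norm (qbinom_coeff a q m * z ^ m) * (norm (1 - a * q ^ m) * norm z / norm (1 - q ^ Suc m))"
      by (simp add: step norm_mult norm_divide norm_power)
    also have "\<dots> \<le> norm (qbinom_coeff a q m * z ^ m) * c"
      by (intro mult_left_mono ratio) auto
    finally show "norm (norm (qbinom_coeff a q (Suc m) * z ^ Suc m))
        \<le> c * norm (norm (qbinom_coeff a q m * z ^ m))"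
      by (simp add: mult.commute)
  qed
qed

definition qbinom_series :: "complex \<Rightarrow> complex \<Rightarrow> complex \<Rightarrow> complex" where
  "qbinom_series a q z = (\<Sum>m. qbinom_coeff a q m * z ^ m)"

lemma qbinom_series_sums:
  "norm q < 1 \<Longrightarrow> norm z < 1 \<Longrightarrow> (\<lambda>m. qbinom_coeff a q m * z ^ m) sums qbinom_series a q z"
  unfolding qbinom_series_def
  by (rule summable_sums, rule summable_norm_cancel, rule qbinom_coeff_summable)

lemma qbinom_series_q_difference:
  assumes q: "norm q < 1" and z: "norm z < 1"
  shows "qbinom_series a q z * (1 - z) = (1 - a * z) * qbinom_series a q (q * z)"
proof -
  let ?f = "qbinom_series a q" and ?c = "qbinom_coeff a q"
  have qz: "norm (q * z) < 1" using norm_mult_power_less_one[OF q z, of 1] by (simp add: mult.commute)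
  have "(\<lambda>m. ?c m * z ^ m - ?c m * (q * z) ^ m) sums (?f z - ?f (q * z))"
    by (intro sums_diff qbinom_series_sums q z qz)
  hence "(\<lambda>m. ?c m * (1 - q ^ m) * z ^ m) sums (?f z - ?f (q * z))"
    by (simp add: algebra_simps power_mult_distrib)
  hence lhs: "(\<lambda>m. ?c (Suc m) * (1 - q ^ Suc m) * z ^ Suc m) sums (?f z - ?f (q * z))"
    by (subst sums_Suc_iff) simp
  have rhs: "(\<lambda>m. z * (?c m * z ^ m - a * (?c m * (q * z) ^ m))) sums (z * (?f z - a * ?f (q * z)))"
    by (intro sums_mult sums_diff qbinom_series_sums q z qz)
  have "?c (Suc m) * (1 - q ^ Suc m) * z ^ Suc m = ?c m * (1 - a * q ^ m) * z ^ Suc m" for m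
    using qbinom_coeff_Suc[OF q] by simp
  hence termwise: "?c (Suc m) * (1 - q ^ Suc m) * z ^ Suc m = z * (?c m * z ^ m - a * (?c m * (q * z) ^ m))" for m
    by (simp add: algebra_simps power_mult_distrib)
  have "?f z - ?f (q * z) = z * (?f z - a * ?f (q * z))"
    using lhs[unfolded termwise] rhs by (rule sums_unique2)
  thus ?thesis by (simp add: algebra_simps)
qed

lemma qbinom_series_iterate:
  assumes q: "norm q < 1" and z: "norm z < 1"
  shows "qbinom_series a q z * qpoch z q N = qpoch (a * z) q N * qbinom_series a q (q ^ N * z)"
proof (induct N)
  case (Suc N)
  have zN: "norm (q ^ N * z) < 1"
    using norm_mult_power_less_one[OF q z, of N] by (simp add: mult.commute)
  have "qbinom_series a q z * qpoch z q (Suc N)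
      = qpoch (a * z) q N * (qbinom_series a q (q ^ N * z) * (1 - q ^ N * z))"
    using Suc by (simp add: qpoch_Suc algebra_simps)
  also have "\<dots> = qpoch (a * z) q N * ((1 - a * (q ^ N * z)) * qbinom_series a q (q * (q ^ N * z)))"
    by (simp only: qbinom_series_q_difference[OF q zN])
  also have "\<dots> = qpoch (a * z) q (Suc N) * qbinom_series a q (q ^ Suc N * z)"
    by (simp add: qpoch_Suc ac_simps)
  finally show ?case .
qed simp

text \<open>The series is a power series with constant term 1, hence continuous at 0.\<close>
lemma qbinom_series_tendsto_one:
  assumes q: "norm q < 1" and z: "norm z < 1"
  shows "(\<lambda>N. qbinom_series a q (q ^ N * z)) \<longlonglongrightarrow> 1"
proof -
  have "summable (\<lambda>m. qbinom_coeff a q m * (1/2) ^ m)"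
    by (rule summable_norm_cancel, rule qbinom_coeff_summable[OF q]) simp
  hence cont: "isCont (qbinom_series a q) 0"
    unfolding qbinom_series_def[abs_def] by (rule isCont_powser) simp
  have "(\<lambda>N. q ^ N * z) \<longlonglongrightarrow> 0 * z"
    by (intro tendsto_intros LIMSEQ_power_zero q)
  hence "(\<lambda>N. qbinom_series a q (q ^ N * z)) \<longlonglongrightarrow> qbinom_series a q 0"
    using isCont_tendsto_compose[OF cont] by simp
  moreover have "qbinom_series a q 0 = 1"
    unfolding qbinom_series_def powser_zero by (simp add: qbinom_coeff_def)
  ultimately show ?thesis by simp
qed

text \<open>For a = 0 the iteration shows that (z;q)_N converges to 1/f(z), and f(z) \<noteq> 0.\<close>
lemma qpoch_tendsto_small:
  assumes q: "norm q < 1" and z: "norm z < 1"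
  shows "(\<lambda>N. qpoch z q N) \<longlonglongrightarrow> inverse (qbinom_series 0 q z)" and "qbinom_series 0 q z \<noteq> 0"
proof -
  let ?f = "qbinom_series 0 q z"
  have lim: "(\<lambda>N. ?f * qpoch z q N) \<longlonglongrightarrow> 1"
    using qbinom_series_iterate[OF q z, of 0] qbinom_series_tendsto_one[OF q z, of 0] by simp
  show nz: "?f \<noteq> 0"
  proof
    assume "?f = 0"
    with lim have "(\<lambda>N. 0::complex) \<longlonglongrightarrow> 1" by simp
    thus False using LIMSEQ_unique[OF tendsto_const] by fastforce
  qed
  have "(\<lambda>N. inverse ?f * (?f * qpoch z q N)) \<longlonglongrightarrow> inverse ?f * 1"
    by (intro tendsto_intros lim)
  moreover have "(\<lambda>N. inverse ?f * (?f * qpoch z q N)) = qpoch z q"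
    using nz by (simp add: fun_eq_iff)
  ultimately show "(\<lambda>N. qpoch z q N) \<longlonglongrightarrow> inverse ?f" by simp
qed

lemma qpoch_tendsto:
  assumes q: "norm q < 1"
  shows "(\<lambda>N. qpoch x q N) \<longlonglongrightarrow> qpoch_inf x q"
proof -
  have "(\<lambda>M. norm (x * q ^ M)) \<longlonglongrightarrow> 0"
    using tendsto_mult_right_zero[OF LIMSEQ_power_zero[OF q], of x] by (simp add: tendsto_norm_zero)
  then obtain M where M: "norm (x * q ^ M) < 1"
    using order_tendstoD(2)[of _ 0 sequentially 1] by (fastforce simp: eventually_sequentially)
  define L where "L = qpoch x q M * inverse (qbinom_series 0 q (x * q ^ M))"
  have "(\<lambda>N. qpoch x q M * qpoch (x * q ^ M) q N) \<longlonglongrightarrow> L"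
    unfolding L_def by (intro tendsto_intros qpoch_tendsto_small q M)
  hence "(\<lambda>N. qpoch x q (N + M)) \<longlonglongrightarrow> L"
    unfolding add.commute[of _ M] qpoch_add .
  hence "qpoch x q \<longlonglongrightarrow> L" by (rule LIMSEQ_offset)
  thus ?thesis unfolding qpoch_inf_def by (simp add: limI)
qed

lemma qpoch_inf_split:
  assumes q: "norm q < 1"
  shows "qpoch_inf x q = qpoch x q j * qpoch_inf (x * q ^ j) q"
proof -
  have "(\<lambda>N. qpoch x q (N + j)) \<longlonglongrightarrow> qpoch x q j * qpoch_inf (x * q ^ j) q"
    unfolding add.commute[of _ j] qpoch_add by (intro tendsto_intros qpoch_tendsto q)
  hence "qpoch x q \<longlonglongrightarrow> qpoch x q j * qpoch_inf (x * q ^ j) q" by (rule LIMSEQ_offset)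
  from LIMSEQ_unique[OF qpoch_tendsto[OF q, of x] this] show ?thesis .
qed

lemma qpoch_inf_nonzero: "norm q < 1 \<Longrightarrow> norm z < 1 \<Longrightarrow> qpoch_inf z q \<noteq> 0"
  using LIMSEQ_unique[OF qpoch_tendsto[of q z] qpoch_tendsto_small(1)[of q z]]
    qpoch_tendsto_small(2)[of q z] by simp

theorem q_binomial_theorem:
  assumes q: "norm q < 1" and z: "norm z < 1"
  shows "qbinom_series a q z = qpoch_inf (a * z) q / qpoch_inf z q"
proof -
  have "(\<lambda>N. qbinom_series a q z * qpoch z q N) \<longlonglongrightarrow> qbinom_series a q z * qpoch_inf z q"
    by (intro tendsto_intros qpoch_tendsto q)
  moreover have "(\<lambda>N. qbinom_series a q z * qpoch z q N) \<longlonglongrightarrow> qpoch_inf (a * z) q * 1"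
    unfolding qbinom_series_iterate[OF q z]
    by (intro tendsto_intros qpoch_tendsto q qbinom_series_tendsto_one z)
  ultimately have "qbinom_series a q z * qpoch_inf z q = qpoch_inf (a * z) q"
    using LIMSEQ_unique by fastforce
  thus ?thesis using qpoch_inf_nonzero[OF q z] by (simp add: field_simps)
qed

section \<open>A q-invariance principle\<close>

text \<open>A function continuous at 0 with f z = f (z q), |q| < 1, is constant: iterate and let
  z q^N tend to 0.  All polynomial identities below are proved by reducing them to this.\<close>
lemma q_invariant_const:
  fixes f :: "complex \<Rightarrow> complex"
  assumes q: "norm q < 1" and cont: "isCont f 0" and inv: "\<And>z. f z = f (z * q)"
  shows "f z = f 0"
proof -
  have iter: "f z = f (z * q ^ N)" for N
    by (induct N) (simp, metis inv mult.assoc mult.commute power_Suc)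
  have "(\<lambda>N. z * q ^ N) \<longlonglongrightarrow> z * 0" by (intro tendsto_intros LIMSEQ_power_zero q)
  hence "(\<lambda>N. f (z * q ^ N)) \<longlonglongrightarrow> f 0" using isCont_tendsto_compose[OF cont] by simp
  hence "(\<lambda>N. f z) \<longlonglongrightarrow> f 0" by (simp only: iter[symmetric])
  thus ?thesis using LIMSEQ_unique[OF tendsto_const] by blast
qed

section \<open>The terminating q-Chu--Vandermonde sum\<close>

definition chu_sum :: "complex \<Rightarrow> nat \<Rightarrow> complex \<Rightarrow> complex" where
  "chu_sum q k A = (\<Sum>j\<le>k. qpoch (inverse (q ^ k)) q j * qpoch A q j * q ^ j / qpoch q q j)"

text \<open>Contiguous relation of the sum in A, from qpoch_contiguous applied termwise.\<close>
lemma chu_sum_rec: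
  assumes q0: "q \<noteq> 0" and q: "norm q < 1"
  shows "chu_sum q (Suc k) A = chu_sum q (Suc k) (A * q) - A * q * (1 - inverse (q ^ Suc k)) * chu_sum q k (A * q)"
proof -
  define x where "x = inverse (q ^ Suc k)"
  have xq: "x * q = inverse (q ^ k)" using q0 by (simp add: x_def field_simps)
  have summand: "qpoch x q (Suc j) * qpoch A q (Suc j) * q ^ Suc j / qpoch q q (Suc j)
      = qpoch x q (Suc j) * qpoch (A * q) q (Suc j) * q ^ Suc j / qpoch q q (Suc j)
        - A * q * (1 - x) * (qpoch (inverse (q ^ k)) q j * qpoch (A * q) q j * q ^ j / qpoch q q j)" for j
  proof -
    have "qpoch q q j \<noteq> 0" and "1 - q ^ Suc j \<noteq> 0"
      using qpoch_q_nonzero[OF q, of j] qpoch_q_nonzero[OF q, of "Suc j"] by (simp_all add: qpoch_Suc)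
    moreover have x_Suc: "qpoch x q (Suc j) = (1 - x) * qpoch (inverse (q ^ k)) q j"
      using qpoch_Suc_left[of x q j] xq by simp
    ultimately show ?thesis
      unfolding qpoch_contiguous[of A q j] qpoch_Suc[of q q j] x_Suc by (simp add: field_simps)
  qed
  have shift: "chu_sum q (Suc k) B
      = 1 + (\<Sum>j\<le>k. qpoch x q (Suc j) * qpoch B q (Suc j) * q ^ Suc j / qpoch q q (Suc j))" for B
    unfolding chu_sum_def x_def by (subst sum.atMost_Suc_shift) simp
  show ?thesis
    unfolding shift summand sum_subtractf chu_sum_def[of q k] sum_distrib_left
    by (simp add: x_def)
qed

text \<open>q-Chu--Vandermonde: 2phi1(q^-k, A; 0; q, q) = A^k.  Both sides satisfy the same
  recursion, so the difference is q-invariant in A and vanishes at A = 1.\<close>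
theorem q_Chu_Vandermonde:
  assumes q0: "q \<noteq> 0" and q: "norm q < 1"
  shows "chu_sum q k A = A ^ k"
proof (induct k arbitrary: A)
  case 0 show ?case by (simp add: chu_sum_def)
next
  case (Suc k)
  define W where "W A = chu_sum q (Suc k) A - A ^ Suc k" for A
  have inv: "W A = W (A * q)" for A
    unfolding W_def chu_sum_rec[OF q0 q, of k A] Suc using q0 by (simp add: field_simps)
  have cont: "isCont W 0"
    unfolding W_def chu_sum_def qpoch_def
    by (intro continuous_intros) (auto simp: qpoch_q_nonzero[OF q, unfolded qpoch_def])
  have "W 1 = 0"
    unfolding W_def chu_sum_def by (subst sum.atMost_Suc_shift) simp
  with q_invariant_const[OF q cont inv, of A] q_invariant_const[OF q cont inv, of 1]
  show ?case by (simp add: W_def)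
qed

section \<open>Two expressions for the Al-Salam--Chihara polynomials\<close>

text \<open>Throughout, e and eb play the roles of e^{i theta} and e^{-i theta} (so e eb = 1);
  the parameter d is written last because the identities are proved by q-invariance in d.
  The convolution form: Q_k/(q;q)_k = sum_m (c eb;q)_m (d e;q)_(k-m) e^m eb^(k-m)/((q;q)_m (q;q)_(k-m)).\<close>
definition asc_conv_term :: "complex \<Rightarrow> complex \<Rightarrow> complex \<Rightarrow> complex \<Rightarrow> nat \<Rightarrow> nat \<Rightarrow> complex \<Rightarrow> complex" where
  "asc_conv_term q c e eb m l d =
     qpoch (c * eb) q m * qpoch (d * e) q l * e ^ m * eb ^ l / (qpoch q q m * qpoch q q l)"

definition asc_conv :: "complex \<Rightarrow> complex \<Rightarrow> complex \<Rightarrow> complex \<Rightarrow> nat \<Rightarrow> complex \<Rightarrow> complex" where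
  "asc_conv q c e eb k d = (\<Sum>m\<le>k. asc_conv_term q c e eb m (k - m) d)"

lemma asc_conv_term_rec:
  assumes q: "norm q < 1" and ee: "e * eb = 1"
  shows "asc_conv_term q c e eb m (Suc l) d
       = asc_conv_term q c e eb m (Suc l) (d * q) - d * asc_conv_term q c e eb m l (d * q)"
proof -
  have "qpoch q q m \<noteq> 0" "qpoch q q l \<noteq> 0" "1 - q ^ Suc l \<noteq> 0"
    using qpoch_q_nonzero[OF q] qpoch_q_nonzero[OF q, of "Suc l"] by (simp_all add: qpoch_Suc)
  moreover have cancel: "e * (eb * z) = z" for z using ee by (metis mult.assoc mult_1)
  moreover have "d * q * e = d * e * q" by (simp add: ac_simps)
  ultimately show ?thesis
    unfolding asc_conv_term_def \<open>d * q * e = d * e * q\<close> qpoch_contiguous[of "d * e" q l]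
      qpoch_Suc[of q q l] power_Suc[of eb l]
    by (simp add: field_simps ee cancel)
qed

lemma asc_conv_rec:
  assumes q: "norm q < 1" and ee: "e * eb = 1"
  shows "asc_conv q c e eb (Suc k) d = asc_conv q c e eb (Suc k) (d * q) - d * asc_conv q c e eb k (d * q)"
proof -
  have split: "asc_conv q c e eb (Suc k) d
      = (\<Sum>m\<le>k. asc_conv_term q c e eb m (Suc (k - m)) d) + asc_conv_term q c e eb (Suc k) 0 d" for d
    unfolding asc_conv_def sum.atMost_Suc by (simp add: Suc_diff_le)
  have "asc_conv_term q c e eb (Suc k) 0 d = asc_conv_term q c e eb (Suc k) 0 (d * q)"
    by (simp add: asc_conv_term_def)
  moreover have "(\<Sum>m\<le>k. asc_conv_term q c e eb m (Suc (k - m)) d) =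
      (\<Sum>m\<le>k. asc_conv_term q c e eb m (Suc (k - m)) (d * q) - d * asc_conv_term q c e eb m (k - m) (d * q))"
    by (intro sum.cong refl asc_conv_term_rec[OF q ee])
  ultimately show ?thesis
    unfolding split asc_conv_def[of q c e eb k] sum_subtractf sum_distrib_left
    by (simp only: algebra_simps)
qed

text \<open>At d = eb all terms except m = k vanish, since (1;q)_l = 0 for l > 0.\<close>
lemma asc_conv_at_eb:
  assumes ee: "e * eb = 1"
  shows "asc_conv q c e eb k eb = qpoch (c * eb) q k * e ^ k / qpoch q q k"
proof (cases k)
  case (Suc k')
  have "asc_conv_term q c e eb m (Suc k' - m) eb = 0" if "m \<le> k'" for m
  proof -
    have "Suc k' - m = Suc (k' - m)" using that by simp
    thus ?thesis using ee by (simp add: asc_conv_term_def mult.commute)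
  qed
  hence "(\<Sum>m\<le>k'. asc_conv_term q c e eb m (Suc k' - m) eb) = 0" by simp
  thus ?thesis unfolding Suc asc_conv_def sum.atMost_Suc by (simp add: asc_conv_term_def)
qed (simp add: asc_conv_def asc_conv_term_def)

text \<open>The 3phi2 form: c^k (q;q)_k P_k = sum_j (q^-k;q)_j (ce,c eb;q)_j q^j/(q;q)_j (cdq^j;q)_(k-j),
  i.e. the definition of Q_k with (cd;q)_k distributed over the sum.\<close>
definition asc_phi_coeff :: "complex \<Rightarrow> complex \<Rightarrow> complex \<Rightarrow> complex \<Rightarrow> nat \<Rightarrow> complex" where
  "asc_phi_coeff q c e eb j = qpoch (c * e) q j * qpoch (c * eb) q j * q ^ j / qpoch q q j"

definition asc_phi_term :: "complex \<Rightarrow> complex \<Rightarrow> complex \<Rightarrow> complex \<Rightarrow> nat \<Rightarrow> nat \<Rightarrow> complex \<Rightarrow> complex" where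
  "asc_phi_term q c e eb k j d =
     qpoch (inverse (q ^ k)) q j * asc_phi_coeff q c e eb j * qpoch (c * d * q ^ j) q (k - j)"

definition asc_phi :: "complex \<Rightarrow> complex \<Rightarrow> complex \<Rightarrow> complex \<Rightarrow> nat \<Rightarrow> complex \<Rightarrow> complex" where
  "asc_phi q c e eb k d = (\<Sum>j\<le>k. asc_phi_term q c e eb k j d) / (c ^ k * qpoch q q k)"

text \<open>The field identity behind the recursion of a single 3phi2 term, with the q-Pochhammer
  symbols abstracted: dk, dK stand for (q^-k;q)_j, (q^-(k+1);q)_j, qj, qK for q^j, q^(k+1).\<close>
lemma asc_phi_term_rec_algebra:
  fixes dk dK qK qj c ck Qk X R d :: complex
  assumes h: "dk * (1 - qK) = dK * (qj - qK)"
    and nz: "c \<noteq> 0" "ck \<noteq> 0" "Qk \<noteq> 0" "1 - qK \<noteq> 0"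
  shows "dK * X * ((1 - c * d * qj) * R) / (c * ck * (Qk * (1 - qK)))
       = dK * X * (R * (1 - c * d * qK)) / (c * ck * (Qk * (1 - qK))) - d * (dk * X * R / (ck * Qk))"
proof -
  have "d * (dk * X * R / (ck * Qk)) = c * d * X * R * (dk * (1 - qK)) / (c * ck * (Qk * (1 - qK)))"
    using nz by (simp add: field_simps)
  also have "\<dots> = c * d * X * R * (dK * (qj - qK)) / (c * ck * (Qk * (1 - qK)))"
    by (simp only: h)
  finally have "d * (dk * X * R / (ck * Qk)) = c * d * X * R * (dK * (qj - qK)) / (c * ck * (Qk * (1 - qK)))" .
  moreover have "dK * X * ((1 - c * d * qj) * R)
      = dK * X * (R * (1 - c * d * qK)) - c * d * X * R * (dK * (qj - qK))"
    by (simp add: algebra_simps)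
  ultimately show ?thesis by (simp only: diff_divide_distrib)
qed

lemma asc_phi_term_rec:
  assumes q0: "q \<noteq> 0" and q: "norm q < 1" and c0: "c \<noteq> 0" and j: "j \<le> k"
  shows "asc_phi_term q c e eb (Suc k) j d / (c ^ Suc k * qpoch q q (Suc k))
       = asc_phi_term q c e eb (Suc k) j (d * q) / (c ^ Suc k * qpoch q q (Suc k))
         - d * (asc_phi_term q c e eb k j (d * q) / (c ^ k * qpoch q q k))"
proof -
  define l where "l = k - j"
  have kl: "Suc k - j = Suc l" "k - j = l" "Suc k = Suc (j + l)" using j by (auto simp: l_def)
  define R where "R = qpoch (c * d * q ^ j * q) q l"
  have P1: "qpoch (c * d * q ^ j) q (Suc l) = (1 - c * d * q ^ j) * R"
    unfolding R_def by (rule qpoch_Suc_left)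
  have P2: "qpoch (c * (d * q) * q ^ j) q (Suc l) = R * (1 - c * d * q ^ Suc k)"
    unfolding R_def qpoch_Suc kl(3) by (simp add: ac_simps power_add)
  have P3: "qpoch (c * (d * q) * q ^ j) q l = R"
    unfolding R_def by (simp add: ac_simps)
  have QK: "qpoch q q (Suc k) = qpoch q q k * (1 - q ^ Suc k)" by (simp add: qpoch_Suc)
  have nz: "1 - q ^ Suc k \<noteq> 0" using qpoch_q_nonzero[OF q, of "Suc k"] by (simp add: qpoch_Suc)
  have h: "qpoch (inverse (q ^ k)) q j * (1 - q ^ Suc k)
      = qpoch (inverse (q ^ Suc k)) q j * (q ^ j - q ^ Suc k)"
  proof -
    have shift: "inverse (q ^ Suc k) * q = inverse (q ^ k)" using q0 by (simp add: field_simps)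
    have "inverse (q ^ Suc k) * q ^ Suc k = 1" using q0 by (simp add: field_simps)
    from qpoch_inverse_power_shift[OF this, of j] show ?thesis unfolding shift .
  qed
  show ?thesis
    unfolding asc_phi_term_def kl(1,2) P1 P2 P3 QK power_Suc[of c k]
    by (rule asc_phi_term_rec_algebra[OF h c0 _ qpoch_q_nonzero[OF q] nz]) (simp add: c0)
qed

lemma asc_phi_rec:
  assumes q0: "q \<noteq> 0" and q: "norm q < 1" and c0: "c \<noteq> 0"
  shows "asc_phi q c e eb (Suc k) d = asc_phi q c e eb (Suc k) (d * q) - d * asc_phi q c e eb k (d * q)"
proof -
  have split: "asc_phi q c e eb (Suc k) d
      = (\<Sum>j\<le>k. asc_phi_term q c e eb (Suc k) j d / (c ^ Suc k * qpoch q q (Suc k)))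
        + asc_phi_term q c e eb (Suc k) (Suc k) d / (c ^ Suc k * qpoch q q (Suc k))" for d
    by (simp only: asc_phi_def sum.atMost_Suc add_divide_distrib sum_divide_distrib)
  have top: "asc_phi_term q c e eb (Suc k) (Suc k) d = asc_phi_term q c e eb (Suc k) (Suc k) (d * q)"
    by (simp add: asc_phi_term_def)
  have lower: "asc_phi q c e eb k (d * q) = (\<Sum>j\<le>k. asc_phi_term q c e eb k j (d * q) / (c ^ k * qpoch q q k))"
    unfolding asc_phi_def by (simp add: sum_divide_distrib)
  have "(\<Sum>j\<le>k. asc_phi_term q c e eb (Suc k) j d / (c ^ Suc k * qpoch q q (Suc k))) =
        (\<Sum>j\<le>k. asc_phi_term q c e eb (Suc k) j (d * q) / (c ^ Suc k * qpoch q q (Suc k))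
         - d * (asc_phi_term q c e eb k j (d * q) / (c ^ k * qpoch q q k)))"
    by (intro sum.cong refl asc_phi_term_rec[OF q0 q c0]) simp
  thus ?thesis unfolding split top lower sum_subtractf sum_distrib_left by simp
qed

text \<open>At d = eb the 3phi2 form reduces, via q-Chu--Vandermonde, to the same value as asc_conv_at_eb.\<close>
lemma asc_phi_at_eb:
  assumes q0: "q \<noteq> 0" and q: "norm q < 1" and c0: "c \<noteq> 0"
  shows "asc_phi q c e eb k eb = qpoch (c * eb) q k * e ^ k / qpoch q q k"
proof -
  have "asc_phi_term q c e eb k j eb
      = qpoch (c * eb) q k * (qpoch (inverse (q ^ k)) q j * qpoch (c * e) q j * q ^ j / qpoch q q j)"
    if "j \<le> k" for j
  proof -
    have "qpoch (c * eb) q k = qpoch (c * eb) q (j + (k - j))" using that by simp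
    hence "qpoch (c * eb) q k = qpoch (c * eb) q j * qpoch (c * eb * q ^ j) q (k - j)"
      by (simp only: qpoch_add)
    thus ?thesis using qpoch_q_nonzero[OF q, of j]
      by (simp add: asc_phi_term_def asc_phi_coeff_def field_simps)
  qed
  hence "(\<Sum>j\<le>k. asc_phi_term q c e eb k j eb) = qpoch (c * eb) q k * chu_sum q k (c * e)"
    unfolding chu_sum_def sum_distrib_left by simp
  thus ?thesis
    unfolding asc_phi_def q_Chu_Vandermonde[OF q0 q] using c0 qpoch_q_nonzero[OF q, of k]
    by (simp add: field_simps power_mult_distrib)
qed

text \<open>The two forms agree: induction on k; the difference is q-invariant in d by the common
  recursion, and it vanishes at d = eb.\<close>
theorem asc_phi_eq_conv:
  assumes q0: "q \<noteq> 0" and q: "norm q < 1" and c0: "c \<noteq> 0" and ee: "e * eb = 1"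
  shows "asc_phi q c e eb k d = asc_conv q c e eb k d"
proof (induct k arbitrary: d)
  case 0 show ?case by (simp add: asc_phi_def asc_conv_def asc_phi_term_def asc_conv_term_def asc_phi_coeff_def)
next
  case (Suc k)
  define W where "W d = asc_phi q c e eb (Suc k) d - asc_conv q c e eb (Suc k) d" for d
  have inv: "W d = W (d * q)" for d
    unfolding W_def asc_phi_rec[OF q0 q c0, of _ _ k d] asc_conv_rec[OF q ee, of _ k d] Suc
    by simp
  have cont: "isCont W 0"
    unfolding W_def asc_phi_def asc_conv_def asc_phi_term_def asc_conv_term_def
    by (intro continuous_intros isCont_qpoch) (simp_all add: qpoch_q_nonzero[OF q] c0)
  have "W eb = 0"
    unfolding W_def asc_phi_at_eb[OF q0 q c0] asc_conv_at_eb[OF ee] by simp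
  with q_invariant_const[OF q cont inv, of d] q_invariant_const[OF q cont inv, of eb]
  show ?case by (simp add: W_def)
qed

lemma qphi_terminating:
  assumes q0: "q \<noteq> 0" and len: "length as = length bs"
  shows "qphi (inverse (q ^ n) # as) bs q z =
    (\<Sum>j\<le>n. qpoch (inverse (q ^ n)) q j * prod_list (map (\<lambda>a. qpoch a q j) as)
       / (qpoch q q j * prod_list (map (\<lambda>b. qpoch b q j) bs)) * z ^ j)"
  unfolding qphi_def using len
  by (subst suminf_finite[where N = "{..n}"]) (auto simp: qpoch_inverse_power_vanish[OF q0])

lemma al_salam_chihara_conv:
  assumes q0: "q \<noteq> 0" and q: "norm q < 1" and c0: "c \<noteq> 0"
    and cd: "\<forall>m::nat. c * d \<noteq> inverse (q ^ m)"
  shows "al_salam_chihara k \<theta> c d q = qpoch q q k * asc_conv q c (cis \<theta>) (cis (- \<theta>)) k d"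
proof -
  let ?e = "cis \<theta>" and ?eb = "cis (- \<theta>)"
  have "al_salam_chihara k \<theta> c d q = qpoch (c * d) q k / c ^ k *
     (\<Sum>j\<le>k. qpoch (inverse (q ^ k)) q j * (qpoch (c * ?e) q j * qpoch (c * ?eb) q j)
        / (qpoch q q j * (qpoch (c * d) q j * qpoch 0 q j)) * q ^ j)"
    unfolding al_salam_chihara_def by (subst qphi_terminating[OF q0]) simp_all
  also have "\<dots> = (\<Sum>j\<le>k. asc_phi_term q c ?e ?eb k j d) / c ^ k"
    unfolding sum_distrib_left sum_divide_distrib
  proof (rule sum.cong[OF refl])
    fix j assume "j \<in> {..k}"
    hence "qpoch (c * d) q k = qpoch (c * d) q (j + (k - j))" by simp
    hence "qpoch (c * d) q k = qpoch (c * d) q j * qpoch (c * d * q ^ j) q (k - j)"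
      by (simp only: qpoch_add)
    thus "qpoch (c * d) q k / c ^ k * (qpoch (inverse (q ^ k)) q j * (qpoch (c * ?e) q j * qpoch (c * ?eb) q j)
        / (qpoch q q j * (qpoch (c * d) q j * qpoch 0 q j)) * q ^ j) = asc_phi_term q c ?e ?eb k j d / c ^ k"
      using qpoch_nonzero[OF cd q0, of j] qpoch_q_nonzero[OF q, of j] c0
      by (simp add: asc_phi_term_def asc_phi_coeff_def field_simps)
  qed
  also have "\<dots> = qpoch q q k * asc_phi q c ?e ?eb k d"
    unfolding asc_phi_def using qpoch_q_nonzero[OF q, of k] c0 by (simp add: field_simps)
  finally show ?thesis by (simp add: asc_phi_eq_conv[OF q0 q c0] cis_mult)
qed

section \<open>The generating function of the Al-Salam--Chihara polynomials\<close>

definition asc_gen :: "complex \<Rightarrow> complex \<Rightarrow> complex \<Rightarrow> complex \<Rightarrow> complex \<Rightarrow> complex \<Rightarrow> complex" where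
  "asc_gen q c d e eb s =
     qpoch_inf (s * c) q * qpoch_inf (s * d) q / (qpoch_inf (s * e) q * qpoch_inf (s * eb) q)"

text \<open>sum_k s^k Q_k/(q;q)_k = (sc,sd;q)_inf/(se,s eb;q)_inf: the convolution form exhibits the
  series as the Cauchy product of two q-binomial series, at s e and at s eb.\<close>
theorem asc_generating_function:
  assumes q: "norm q < 1" and ee: "e * eb = 1" and ne: "norm e = 1" and neb: "norm eb = 1"
    and s: "norm s < 1"
  shows "(\<lambda>k. s ^ k * asc_conv q c e eb k d) sums asc_gen q c d e eb s"
proof -
  define f where "f m = qbinom_coeff (c * eb) q m * (s * e) ^ m" for m
  define g where "g m = qbinom_coeff (d * e) q m * (s * eb) ^ m" for m
  have se: "norm (s * e) < 1" and seb: "norm (s * eb) < 1" using s ne neb by (simp_all add: norm_mult)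
  have "suminf f = qpoch_inf (c * eb * (s * e)) q / qpoch_inf (s * e) q"
    unfolding f_def q_binomial_theorem[OF q se, symmetric] qbinom_series_def ..
  also have "c * eb * (s * e) = s * c" using ee by (simp add: ac_simps)
  finally have F: "suminf f = qpoch_inf (s * c) q / qpoch_inf (s * e) q" .
  have "suminf g = qpoch_inf (d * e * (s * eb)) q / qpoch_inf (s * eb) q"
    unfolding g_def q_binomial_theorem[OF q seb, symmetric] qbinom_series_def ..
  also have "d * e * (s * eb) = s * d" using ee by (simp add: ac_simps)
  finally have G: "suminf g = qpoch_inf (s * d) q / qpoch_inf (s * eb) q" .
  have "f i * g (k - i) = s ^ k * asc_conv_term q c e eb i (k - i) d" if "i \<le> k" for i k
  proof -
    have "s ^ k = s ^ i * s ^ (k - i)" using that by (simp add: power_add[symmetric])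
    thus ?thesis unfolding f_def g_def asc_conv_term_def qbinom_coeff_def
      by (simp add: power_mult_distrib field_simps)
  qed
  hence "(\<Sum>i\<le>k. f i * g (k - i)) = s ^ k * asc_conv q c e eb k d" for k
    by (simp add: asc_conv_def sum_distrib_left)
  moreover have "(\<lambda>k. \<Sum>i\<le>k. f i * g (k - i)) sums (suminf f * suminf g)"
    unfolding f_def g_def by (intro Cauchy_product_sums qbinom_coeff_summable q se seb)
  ultimately show ?thesis unfolding F G asc_gen_def by simp
qed

section \<open>The bilinear generating function\<close>

definition lqj_coeff :: "nat \<Rightarrow> complex \<Rightarrow> complex \<Rightarrow> complex \<Rightarrow> nat \<Rightarrow> complex" where
  "lqj_coeff n a b q j = qpoch (inverse (q ^ n)) q j * qpoch (a * b * q ^ (n + 1)) q j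
      / (qpoch q q j * qpoch (a * q) q j) * q ^ j"

lemma little_qJacobi_expansion:
  assumes "q \<noteq> 0"
  shows "little_qJacobi n (q ^ k) a b q = (\<Sum>j\<le>n. lqj_coeff n a b q j * (q ^ j) ^ k)"
  unfolding little_qJacobi_def using assms
  by (subst qphi_terminating) (simp_all add: lqj_coeff_def power_mult_distrib power_mult[symmetric] ac_simps)

lemma bilinear_term_expansion:
  assumes q0: "q \<noteq> 0" and q: "norm q < 1" and c0: "c \<noteq> 0"
    and cd: "\<forall>m::nat. c * d \<noteq> inverse (q ^ m)"
  shows "t ^ k / qpoch q q k * little_qJacobi n (q ^ k) a b q * al_salam_chihara k \<theta> c d q
      = (\<Sum>j\<le>n. lqj_coeff n a b q j * ((t * q ^ j) ^ k * asc_conv q c (cis \<theta>) (cis (- \<theta>)) k d))"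
  unfolding little_qJacobi_expansion[OF q0] al_salam_chihara_conv[OF q0 q c0 cd]
    sum_distrib_left sum_distrib_right
  using qpoch_q_nonzero[OF q, of k] by (intro sum.cong) (simp_all add: field_simps power_mult_distrib)

text \<open>Splitting (x;q)_inf = (x;q)_j (xq^j;q)_inf in the four infinite products turns
  the combination of generating functions into the terminating 4phi3.\<close>
lemma phi43_expansion:
  assumes q0: "q \<noteq> 0" and q: "norm q < 1" and ee: "e * eb = 1" and t: "norm t < 1"
    and ne: "norm e = 1" and neb: "norm eb = 1"
    and aq: "\<forall>m::nat. a * q \<noteq> inverse (q ^ m)"
    and tc: "\<forall>m::nat. t * c \<noteq> inverse (q ^ m)"
    and td: "\<forall>m::nat. t * d \<noteq> inverse (q ^ m)"
  shows "asc_gen q c d e eb t * qphi [inverse (q ^ n), a * b * q ^ (n + 1), t * e, t * eb] [a * q, t * c, t * d] q q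
      = (\<Sum>j\<le>n. lqj_coeff n a b q j * asc_gen q c d e eb (t * q ^ j))"
proof -
  have te: "norm (t * e) < 1" and teb: "norm (t * eb) < 1" using t ne neb by (simp_all add: norm_mult)
  have split: "qpoch_inf (t * q ^ j * x) q = qpoch_inf (t * x) q / qpoch (t * x) q j"
    if "qpoch (t * x) q j \<noteq> 0" for x j
    using qpoch_inf_split[OF q, of "t * x" j] that by (simp add: field_simps ac_simps)
  note nz = qpoch_nonzero[OF tc q0] qpoch_nonzero[OF td q0]
    qpoch_nonzero_small[OF te q] qpoch_nonzero_small[OF teb q]
  have "asc_gen q c d e eb t * (qpoch (inverse (q ^ n)) q j *
          (qpoch (a * b * q ^ (n + 1)) q j * (qpoch (t * e) q j * qpoch (t * eb) q j)) /
         (qpoch q q j * (qpoch (a * q) q j * (qpoch (t * c) q j * qpoch (t * d) q j))) * q ^ j)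
      = lqj_coeff n a b q j * asc_gen q c d e eb (t * q ^ j)" for j
    unfolding asc_gen_def lqj_coeff_def split[OF nz(1)] split[OF nz(2)] split[OF nz(3)] split[OF nz(4)]
    using qpoch_nonzero[OF aq q0, of j] nz[of j] qpoch_inf_nonzero[OF q te] qpoch_inf_nonzero[OF q teb]
      qpoch_q_nonzero[OF q, of j]
    by (simp add: field_simps)
  thus ?thesis
    by (subst qphi_terminating[OF q0]) (simp_all add: sum_distrib_left)
qed

text \<open>The main theorem.  The restriction of theta to [0, pi] only makes x = cos theta
  determine theta; the identity holds for every real theta.\<close>
theorem mainTheorem6:
  fixes q \<theta> :: real and a b c d t :: complex and n :: nat
  assumes "0 < q" "q < 1"
    and "\<forall>m::nat. a * of_real q \<noteq> inverse (of_real q ^ m)"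
    and "norm t < 1"
    and "\<forall>m::nat. t * c \<noteq> inverse (of_real q ^ m)"
    and "\<forall>m::nat. t * d \<noteq> inverse (of_real q ^ m)"
    and "c \<noteq> 0"
    and "\<forall>m::nat. c * d \<noteq> inverse (of_real q ^ m)"
    and "0 \<le> \<theta>" "\<theta> \<le> pi"
  shows "(\<lambda>k. t ^ k / qpoch (of_real q) (of_real q) k
              * little_qJacobi n (of_real q ^ k) a b (of_real q)
              * al_salam_chihara k \<theta> c d (of_real q))
         sums (qpoch_inf (t * c) (of_real q) * qpoch_inf (t * d) (of_real q)
               / (qpoch_inf (t * cis \<theta>) (of_real q) * qpoch_inf (t * cis (- \<theta>)) (of_real q))
               * qphi [inverse (of_real q ^ n), a * b * of_real q ^ (n + 1), t * cis \<theta>, t * cis (- \<theta>)]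
                      [a * of_real q, t * c, t * d] (of_real q) (of_real q))"
proof -
  let ?Q = "complex_of_real q" and ?e = "cis \<theta>" and ?eb = "cis (- \<theta>)"
  have Q0: "?Q \<noteq> 0" and Q: "norm ?Q < 1" and ee: "?e * ?eb = 1"
    and ne: "norm ?e = 1" "norm ?eb = 1"
    using assms(1,2) by (simp_all add: cis_mult)
  have "(\<lambda>k. \<Sum>j\<le>n. lqj_coeff n a b ?Q j * ((t * ?Q ^ j) ^ k * asc_conv ?Q c ?e ?eb k d))
      sums (\<Sum>j\<le>n. lqj_coeff n a b ?Q j * asc_gen ?Q c d ?e ?eb (t * ?Q ^ j))"
    using norm_mult_power_less_one[OF Q assms(4)]
    by (intro sums_sum sums_mult asc_generating_function Q ee ne)
  also have "\<dots> = asc_gen ?Q c d ?e ?eb t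
      * qphi [inverse (?Q ^ n), a * b * ?Q ^ (n + 1), t * ?e, t * ?eb] [a * ?Q, t * c, t * d] ?Q ?Q"
    by (rule phi43_expansion[OF Q0 Q ee assms(4) ne assms(3,5,6), symmetric])
  finally show ?thesis
    unfolding bilinear_term_expansion[OF Q0 Q assms(7,8)] asc_gen_def .
qed

end
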